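(* Let $(X,\sigma)$ be a complete metric-like space, and let $\varphi:(0,\infty)\to(1,\infty)$ be a function such that for every sequence $\{t_n\}\subset(0,\infty)$, $\varphi(t_n)\to 1$ from above implies $t_n\to0$. Suppose $S,T:X\to X$ are onto mappings such that $\sigma(Tx,Sy)\geq \varphi(\sigma(x,y))\,\sigma(x,y)$ for all $x,y\in X$ with $\sigma(x,y)>0$. Then $T$ and $S$ have a common fixed point.
   Context: A metric-like on $X$ is a map $\sigma:X\times X\to[0,\infty)$ such that for all $x,y,z\in X$: $\sigma(x,y)=0\Rightarrow x=y$; $\sigma(x,y)=\sigma(y,x)$; $\sigma(x,z)\le\sigma(x,y)+\sigma(y,z)$. A sequence $\{x_n\}$ converges to $x$ if $\lim_n\sigma(x_n,x)=\sigma(x,x)$; it is Cauchy if $\lim_{n,m}\sigma(x_n,x_m)$ exists and is finite; $(X,\sigma)$ is complete if every Cauchy sequence $\{x_n\}$ converges to some $x$ with $\lim_{n,m}\sigma(x_n,x_m)=\sigma(x,x)=\lim_n\sigma(x_n,x)$. *)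

theory Defs
  imports "HOL-Analysis.Analysis"
begin

definition metric_like :: "('a \<Rightarrow> 'a \<Rightarrow> real) \<Rightarrow> bool" where
  "metric_like \<sigma> \<longleftrightarrow>
     (\<forall>x y. 0 \<le> \<sigma> x y) \<and>
     (\<forall>x y. \<sigma> x y = 0 \<longrightarrow> x = y) \<and>
     (\<forall>x y. \<sigma> x y = \<sigma> y x) \<and>
     (\<forall>x y z. \<sigma> x z \<le> \<sigma> x y + \<sigma> y z)"

definition ml_double_limit :: "('a \<Rightarrow> 'a \<Rightarrow> real) \<Rightarrow> (nat \<Rightarrow> 'a) \<Rightarrow> real \<Rightarrow> bool" where
  "ml_double_limit \<sigma> x L \<longleftrightarrow>
     (\<forall>e>0. \<exists>N. \<forall>n\<ge>N. \<forall>m\<ge>N. \<bar>\<sigma> (x n) (x m) - L\<bar> < e)"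

definition ml_converges :: "('a \<Rightarrow> 'a \<Rightarrow> real) \<Rightarrow> (nat \<Rightarrow> 'a) \<Rightarrow> 'a \<Rightarrow> bool" where
  "ml_converges \<sigma> x p \<longleftrightarrow> ((\<lambda>n. \<sigma> (x n) p) \<longlonglongrightarrow> \<sigma> p p)"

definition ml_Cauchy :: "('a \<Rightarrow> 'a \<Rightarrow> real) \<Rightarrow> (nat \<Rightarrow> 'a) \<Rightarrow> bool" where
  "ml_Cauchy \<sigma> x \<longleftrightarrow> (\<exists>L. ml_double_limit \<sigma> x L)"

definition ml_complete :: "('a \<Rightarrow> 'a \<Rightarrow> real) \<Rightarrow> bool" where
  "ml_complete \<sigma> \<longleftrightarrow>
     (\<forall>x. ml_Cauchy \<sigma> x \<longrightarrow>
        (\<exists>p. ml_double_limit \<sigma> x (\<sigma> p p) \<and> ml_converges \<sigma> x p))"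

end

theory Submission
  imports Defs
begin

text \<open>
  Pull the space back along the surjections: choose a sequence with \<open>T x\<^sub>1 = x\<^sub>0\<close>,
  \<open>S x\<^sub>2 = x\<^sub>1\<close>, \<open>T x\<^sub>3 = x\<^sub>2\<close>, \<dots>  The expansivity of the pair \<open>(T, S)\<close> then says that
  passing from \<open>(x\<^sub>i, x\<^sub>j)\<close> to \<open>(x\<^sub>i\<^sub>+\<^sub>1, x\<^sub>j\<^sub>+\<^sub>1)\<close> with \<open>i + j\<close> odd shrinks the distance by the
  factor \<open>\<phi>\<close>.  Since \<open>\<phi>\<close> stays uniformly above \<open>1\<close> away from \<open>0\<close>, the sequence is Cauchy
  with double limit \<open>0\<close>; its limit \<open>p\<close> has \<open>\<sigma>(p, p) = 0\<close>, and comparing \<open>p\<close> with a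
  preimage of \<open>p\<close> under \<open>S\<close> (or \<open>T\<close>) along the sequence shows that this preimage is \<open>p\<close>.
\<close>

lemma phi_bounded_away_from_one:
  fixes \<phi> :: "real \<Rightarrow> real"
  assumes phi_gt_one: "\<forall>t>0. \<phi> t > 1"
    and phi_limit: "\<forall>t :: nat \<Rightarrow> real. (\<forall>n. t n > 0) \<longrightarrow>
            filterlim (\<lambda>n. \<phi> (t n)) (at_right 1) sequentially \<longrightarrow> t \<longlonglongrightarrow> 0"
    and "\<epsilon> > 0"
  obtains c where "c > 1" "\<And>t. t \<ge> \<epsilon> \<Longrightarrow> c \<le> \<phi> t"
proof (rule ccontr)
  assume "\<not> thesis"
  with that have "\<exists>t\<ge>\<epsilon>. \<phi> t < 1 + inverse (real (Suc n))" for n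
    by (meson less_add_same_cancel1 not_le positive_imp_inverse_positive of_nat_0_less_iff zero_less_Suc)
  then obtain t where t_ge: "\<And>n. t n \<ge> \<epsilon>" and t_lt: "\<And>n. \<phi> (t n) < 1 + inverse (real (Suc n))"
    by metis
  have t_pos: "\<forall>n. t n > 0"
    using t_ge \<open>\<epsilon> > 0\<close> by (meson less_le_trans)
  then have phi_t_gt: "\<phi> (t n) > 1" for n
    using phi_gt_one by blast
  have upper_limit: "(\<lambda>n. 1 + inverse (real (Suc n))) \<longlonglongrightarrow> 1"
    using tendsto_add[OF tendsto_const LIMSEQ_inverse_real_of_nat, of 1] by simp
  have "(\<lambda>n. \<phi> (t n)) \<longlonglongrightarrow> 1"
    by (rule tendsto_sandwich[of "\<lambda>_. 1" _ _ "\<lambda>n. 1 + inverse (real (Suc n))"])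
       (use phi_t_gt t_lt upper_limit in \<open>auto intro!: always_eventually less_imp_le\<close>)
  then have "filterlim (\<lambda>n. \<phi> (t n)) (at_right 1) sequentially"
    unfolding filterlim_at using phi_t_gt by (auto simp: less_imp_neq[symmetric])
  then have "t \<longlonglongrightarrow> 0"
    using phi_limit t_pos by blast
  then have "eventually (\<lambda>n. t n < \<epsilon>) sequentially"
    using \<open>\<epsilon> > 0\<close> by (rule order_tendstoD(2))
  then show False
    using t_ge by (metis eventually_sequentially not_le order_refl)
qed

lemma alternating_preimage_sequence:
  fixes S T :: "'a \<Rightarrow> 'a"
  assumes "surj S" "surj T"
  obtains x where "x 0 = x\<^sub>0"
    "\<And>n. even n \<Longrightarrow> T (x (Suc n)) = x n" "\<And>n. odd n \<Longrightarrow> S (x (Suc n)) = x n"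
proof
  define x where "x = rec_nat x\<^sub>0 (\<lambda>n y. if even n then inv T y else inv S y)"
  show "x 0 = x\<^sub>0"
    by (simp add: x_def)
  show "T (x (Suc n)) = x n" if "even n" for n
    using that surj_f_inv_f[OF \<open>surj T\<close>] by (simp add: x_def)
  show "S (x (Suc n)) = x n" if "odd n" for n
    using that surj_f_inv_f[OF \<open>surj S\<close>] by (simp add: x_def)
qed

lemma ml_double_limit_unique:
  assumes "ml_double_limit \<sigma> x L" "ml_double_limit \<sigma> x L'"
  shows "L = L'"
proof (rule ccontr)
  assume "L \<noteq> L'"
  then have "\<bar>L - L'\<bar> / 2 > 0"
    by simp
  then obtain N N' where "\<forall>n\<ge>N. \<forall>m\<ge>N. \<bar>\<sigma> (x n) (x m) - L\<bar> < \<bar>L - L'\<bar> / 2"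
    and "\<forall>n\<ge>N'. \<forall>m\<ge>N'. \<bar>\<sigma> (x n) (x m) - L'\<bar> < \<bar>L - L'\<bar> / 2"
    using assms unfolding ml_double_limit_def by meson
  then have "\<bar>\<sigma> (x (max N N')) (x (max N N')) - L\<bar> < \<bar>L - L'\<bar> / 2"
    "\<bar>\<sigma> (x (max N N')) (x (max N N')) - L'\<bar> < \<bar>L - L'\<bar> / 2"
    by auto
  then show False
    by (simp add: abs_less_iff abs_if split: if_splits)
qed

locale metric_like_space =
  fixes \<sigma> :: "'a \<Rightarrow> 'a \<Rightarrow> real"
  assumes metric_like: "metric_like \<sigma>"
begin

lemma nonneg: "0 \<le> \<sigma> a b"
  and eq_if_zero: "\<sigma> a b = 0 \<Longrightarrow> a = b"
  and commute: "\<sigma> a b = \<sigma> b a"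
  and triangle: "\<sigma> a c \<le> \<sigma> a b + \<sigma> b c"
  using metric_like unfolding metric_like_def by blast+

lemma self_dist_le_twice: "\<sigma> a a \<le> 2 * \<sigma> a b"
  using triangle[of a a b] commute[of a b] by simp

lemma eq_if_nonpos: "\<sigma> a b \<le> 0 \<Longrightarrow> a = b"
  using nonneg[of a b] eq_if_zero by simp

lemma weakly_expansive:
  assumes phi_gt_one: "\<forall>t>0. \<phi> t > 1"
    and expansive: "\<forall>a b. \<sigma> a b > 0 \<longrightarrow> \<sigma> (T a) (S b) \<ge> \<phi> (\<sigma> a b) * \<sigma> a b"
  shows "\<sigma> a b \<le> \<sigma> (T a) (S b)"
proof (cases "\<sigma> a b > 0")
  case True
  then have "\<sigma> a b \<le> \<phi> (\<sigma> a b) * \<sigma> a b"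
    using phi_gt_one by (simp add: less_imp_le)
  also have "\<dots> \<le> \<sigma> (T a) (S b)"
    using expansive True by blast
  finally show ?thesis .
next
  case False
  then show ?thesis
    using nonneg[of a b] nonneg[of "T a" "S b"] by linarith
qed

lemma preimage_sequence_contracts:
  assumes expansive: "\<forall>a b. \<sigma> a b > 0 \<longrightarrow> \<sigma> (T a) (S b) \<ge> \<phi> (\<sigma> a b) * \<sigma> a b"
    and T_preimage: "\<And>n. even n \<Longrightarrow> T (x (Suc n)) = x n"
    and S_preimage: "\<And>n. odd n \<Longrightarrow> S (x (Suc n)) = x n"
    and "odd (i + j)" "\<sigma> (x (Suc i)) (x (Suc j)) > 0"
  shows "\<phi> (\<sigma> (x (Suc i)) (x (Suc j))) * \<sigma> (x (Suc i)) (x (Suc j)) \<le> \<sigma> (x i) (x j)"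
proof (cases "even i")
  case True
  with \<open>odd (i + j)\<close> have "odd j"
    by simp
  with True show ?thesis
    using expansive assms(5) T_preimage[of i] S_preimage[of j] by metis
next
  case False
  with \<open>odd (i + j)\<close> have "even j"
    by simp
  with False show ?thesis
    using expansive assms(5) T_preimage[of j] S_preimage[of i] commute by metis
qed

lemma fixed_point_of_limit:
  assumes weakly_expansive: "\<And>a b. \<sigma> a b \<le> \<sigma> (T a) (S b)"
    and "surj S"
    and T_preimage: "\<And>n. T (x (Suc (2 * n))) = x (2 * n)"
    and limit: "(\<lambda>n. \<sigma> (x n) p) \<longlonglongrightarrow> 0"
  shows "S p = p"
proof -
  obtain v where v: "p = S v"
    using \<open>surj S\<close> by (metis surjD)
  have bound: "\<sigma> p v \<le> \<sigma> (x (Suc (2 * n))) p + \<sigma> (x (2 * n)) p" for n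
  proof -
    have "\<sigma> p v \<le> \<sigma> p (x (Suc (2 * n))) + \<sigma> (x (Suc (2 * n))) v"
      by (rule triangle)
    also have "\<sigma> (x (Suc (2 * n))) v \<le> \<sigma> (x (2 * n)) p"
      using weakly_expansive[of "x (Suc (2 * n))" v] by (simp add: T_preimage v)
    finally show ?thesis
      by (simp add: commute)
  qed
  have "strict_mono (\<lambda>n. Suc (2 * n))" "strict_mono (\<lambda>n. 2 * n :: nat)"
    by (auto intro: strict_monoI)
  then have "(\<lambda>n. \<sigma> (x (Suc (2 * n))) p + \<sigma> (x (2 * n)) p) \<longlonglongrightarrow> 0"
    using tendsto_add[OF LIMSEQ_subseq_LIMSEQ LIMSEQ_subseq_LIMSEQ, OF limit _ limit]
    by (simp add: o_def)
  then have "\<sigma> p v \<le> 0"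
    using bound by (intro LIMSEQ_le_const) auto
  then have "p = v"
    by (rule eq_if_nonpos)
  then show ?thesis
    using v by simp
qed

end

locale odd_gap_contraction = metric_like_space \<sigma>
  for \<sigma> :: "'a \<Rightarrow> 'a \<Rightarrow> real" +
  fixes \<phi> :: "real \<Rightarrow> real" and x :: "nat \<Rightarrow> 'a"
  assumes phi_gt_one: "\<forall>t>0. \<phi> t > 1"
    and phi_limit: "\<forall>t :: nat \<Rightarrow> real. (\<forall>n. t n > 0) \<longrightarrow>
            filterlim (\<lambda>n. \<phi> (t n)) (at_right 1) sequentially \<longrightarrow> t \<longlonglongrightarrow> 0"
    and contracts: "\<And>i j. odd (i + j) \<Longrightarrow> \<sigma> (x (Suc i)) (x (Suc j)) > 0 \<Longrightarrow>
            \<phi> (\<sigma> (x (Suc i)) (x (Suc j))) * \<sigma> (x (Suc i)) (x (Suc j)) \<le> \<sigma> (x i) (x j)"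
begin

lemma contracts_weakly:
  assumes "odd (i + j)"
  shows "\<sigma> (x (Suc i)) (x (Suc j)) \<le> \<sigma> (x i) (x j)"
proof (cases "\<sigma> (x (Suc i)) (x (Suc j)) > 0")
  case True
  then have "\<sigma> (x (Suc i)) (x (Suc j)) \<le> \<phi> (\<sigma> (x (Suc i)) (x (Suc j))) * \<sigma> (x (Suc i)) (x (Suc j))"
    using phi_gt_one by (simp add: less_imp_le)
  also have "\<dots> \<le> \<sigma> (x i) (x j)"
    using contracts[OF assms True] .
  finally show ?thesis .
next
  case False
  then show ?thesis
    using nonneg[of "x i" "x j"] by linarith
qed

lemma contracts_by_factor:
  assumes phi_ge: "\<And>t. t \<ge> \<eta> \<Longrightarrow> c \<le> \<phi> t" and "\<eta> > 0"
    and "odd (i + j)" and far: "\<sigma> (x (Suc i)) (x (Suc j)) \<ge> \<eta>"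
  shows "c * \<sigma> (x (Suc i)) (x (Suc j)) \<le> \<sigma> (x i) (x j)"
proof -
  have pos: "\<sigma> (x (Suc i)) (x (Suc j)) > 0"
    using far \<open>\<eta> > 0\<close> by linarith
  have "c * \<sigma> (x (Suc i)) (x (Suc j)) \<le> \<phi> (\<sigma> (x (Suc i)) (x (Suc j))) * \<sigma> (x (Suc i)) (x (Suc j))"
    using phi_ge[OF far] pos by (intro mult_right_mono) auto
  also have "\<dots> \<le> \<sigma> (x i) (x j)"
    using contracts[OF \<open>odd (i + j)\<close> pos] .
  finally show ?thesis .
qed

lemma step_dist_antimono:
  assumes "m \<le> n"
  shows "\<sigma> (x n) (x (Suc n)) \<le> \<sigma> (x m) (x (Suc m))"
  using assms
proof (induction n rule: dec_induct)
  case (step n)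
  then show ?case
    using contracts_weakly[of n "Suc n"] by simp
qed simp

lemma step_dist_tendsto_zero: "(\<lambda>n. \<sigma> (x n) (x (Suc n))) \<longlonglongrightarrow> 0"
proof (rule order_tendstoI)
  show "eventually (\<lambda>n. a < \<sigma> (x n) (x (Suc n))) sequentially" if "a < 0" for a
    using that nonneg by (simp add: less_le_trans)
next
  fix \<eta> :: real
  assume "0 < \<eta>"
  have "\<exists>N. \<sigma> (x N) (x (Suc N)) < \<eta>"
  proof (rule ccontr)
    assume "\<not> ?thesis"
    then have far: "\<eta> \<le> \<sigma> (x n) (x (Suc n))" for n
      by (meson not_le)
    obtain c where "c > 1" and phi_ge: "\<And>t. t \<ge> \<eta> \<Longrightarrow> c \<le> \<phi> t"
      using phi_bounded_away_from_one[OF phi_gt_one phi_limit \<open>0 < \<eta>\<close>] by blast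
    have step: "c * \<sigma> (x (Suc n)) (x (Suc (Suc n))) \<le> \<sigma> (x n) (x (Suc n))" for n
      using contracts_by_factor[OF phi_ge \<open>0 < \<eta>\<close>, of n "Suc n"] far[of "Suc n"] by simp
    have geometric: "c ^ n * \<sigma> (x n) (x (Suc n)) \<le> \<sigma> (x 0) (x 1)" for n
    proof (induction n)
      case (Suc n)
      have "c ^ Suc n * \<sigma> (x (Suc n)) (x (Suc (Suc n)))
          = c ^ n * (c * \<sigma> (x (Suc n)) (x (Suc (Suc n))))"
        by simp
      also have "\<dots> \<le> c ^ n * \<sigma> (x n) (x (Suc n))"
        using step[of n] \<open>c > 1\<close> by (intro mult_left_mono) auto
      finally show ?case
        using Suc.IH by linarith
    qed simp
    obtain n where "\<sigma> (x 0) (x 1) / \<eta> < c ^ n"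
      using real_arch_pow[OF \<open>c > 1\<close>] by blast
    then have "\<sigma> (x 0) (x 1) < c ^ n * \<eta>"
      using \<open>0 < \<eta>\<close> by (simp add: divide_less_eq)
    also have "\<dots> \<le> c ^ n * \<sigma> (x n) (x (Suc n))"
      using far[of n] \<open>c > 1\<close> by (intro mult_left_mono) auto
    finally show False
      using geometric[of n] by linarith
  qed
  then obtain N where "\<sigma> (x N) (x (Suc N)) < \<eta>" ..
  then show "eventually (\<lambda>n. \<sigma> (x n) (x (Suc n)) < \<eta>) sequentially"
    using step_dist_antimono by (intro eventually_sequentiallyI[of N]) (meson le_less_trans)
qed

lemma eventually_step_dist_less:
  assumes "\<eta> > 0"
  obtains N where "\<And>n. n \<ge> N \<Longrightarrow> \<sigma> (x n) (x (Suc n)) < \<eta>"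
  using order_tendstoD(2)[OF step_dist_tendsto_zero assms] unfolding eventually_sequentially
  by blast

text \<open>
  If \<open>\<sigma>(x\<^sub>i, x\<^sub>j) < \<epsilon>\<close> with \<open>i + j\<close> odd, then \<open>\<sigma>(x\<^sub>i\<^sub>+\<^sub>1, x\<^sub>j\<^sub>+\<^sub>1) < \<epsilon>' := max (\<epsilon>/c) (\<epsilon>/2) < \<epsilon>\<close>;
  once two consecutive steps are below \<open>(\<epsilon> - \<epsilon>')/2\<close>, the triangle inequality lets the odd
  gap grow by two without leaving the \<open>\<epsilon>\<close>-ball.
\<close>
lemma odd_gap_dist_small:
  assumes "\<epsilon> > 0"
  obtains N where "\<And>n k. n \<ge> N \<Longrightarrow> \<sigma> (x n) (x (n + 2 * k + 1)) < \<epsilon>"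
proof -
  obtain c where "c > 1" and phi_ge: "\<And>t. t \<ge> \<epsilon> / 2 \<Longrightarrow> c \<le> \<phi> t"
    using phi_bounded_away_from_one[OF phi_gt_one phi_limit, of "\<epsilon> / 2"] \<open>\<epsilon> > 0\<close> by auto
  define \<epsilon>' where "\<epsilon>' = max (\<epsilon> / c) (\<epsilon> / 2)"
  have "\<epsilon>' < \<epsilon>" "\<epsilon> / 2 \<le> \<epsilon>'"
    unfolding \<epsilon>'_def using \<open>c > 1\<close> \<open>\<epsilon> > 0\<close> by (auto simp: divide_less_eq)
  have shrink: "\<sigma> (x (Suc i)) (x (Suc j)) < \<epsilon>'"
    if "odd (i + j)" "\<sigma> (x i) (x j) < \<epsilon>" for i j
  proof (cases "\<sigma> (x (Suc i)) (x (Suc j)) < \<epsilon> / 2")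
    case False
    have "c * \<sigma> (x (Suc i)) (x (Suc j)) \<le> \<sigma> (x i) (x j)"
      by (rule contracts_by_factor[where \<eta> = "\<epsilon> / 2", OF phi_ge]) (use False \<open>\<epsilon> > 0\<close> that(1) in auto)
    with that(2) have "c * \<sigma> (x (Suc i)) (x (Suc j)) < \<epsilon>"
      by linarith
    then have "\<sigma> (x (Suc i)) (x (Suc j)) < \<epsilon> / c"
      using \<open>c > 1\<close> by (simp add: less_divide_eq mult.commute)
    then show ?thesis
      unfolding \<epsilon>'_def by linarith
  qed (use \<open>\<epsilon> / 2 \<le> \<epsilon>'\<close> in linarith)
  obtain N where steps: "\<And>n. n \<ge> N \<Longrightarrow> \<sigma> (x n) (x (Suc n)) < (\<epsilon> - \<epsilon>') / 2"
    using eventually_step_dist_less[of "(\<epsilon> - \<epsilon>') / 2"] \<open>\<epsilon>' < \<epsilon>\<close> by auto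
  have "\<sigma> (x n) (x (n + 2 * k + 1)) < \<epsilon>" if "n \<ge> N" for n k
  proof (induction k)
    case 0
    then show ?case
      using steps[OF that] \<open>\<epsilon>' < \<epsilon>\<close> \<open>\<epsilon> / 2 \<le> \<epsilon>'\<close> by simp
  next
    case (Suc k)
    let ?m = "n + 2 * k + 1"
    have "\<sigma> (x n) (x (Suc (Suc ?m)))
        \<le> \<sigma> (x n) (x (Suc n)) + \<sigma> (x (Suc n)) (x (Suc (Suc n))) + \<sigma> (x (Suc (Suc n))) (x (Suc (Suc ?m)))"
      using triangle[of "x n" "x (Suc (Suc ?m))" "x (Suc n)"]
        triangle[of "x (Suc n)" "x (Suc (Suc ?m))" "x (Suc (Suc n))"] by linarith
    also have "\<sigma> (x (Suc (Suc n))) (x (Suc (Suc ?m))) \<le> \<sigma> (x (Suc n)) (x (Suc ?m))"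
      using contracts_weakly[of "Suc n" "Suc ?m"] by simp
    also have "\<sigma> (x (Suc n)) (x (Suc ?m)) < \<epsilon>'"
      using shrink[of n ?m] Suc.IH by simp
    finally show ?case
      using steps[of n] steps[of "Suc n"] that by (simp add: algebra_simps)
  qed
  then show thesis
    using that by blast
qed

lemma double_limit_zero: "ml_double_limit \<sigma> x 0"
  unfolding ml_double_limit_def
proof (intro allI impI)
  fix \<epsilon> :: real
  assume "\<epsilon> > 0"
  obtain N\<^sub>1 where odd_gap: "\<And>n k. n \<ge> N\<^sub>1 \<Longrightarrow> \<sigma> (x n) (x (n + 2 * k + 1)) < \<epsilon> / 2"
    using odd_gap_dist_small[of "\<epsilon> / 2"] \<open>\<epsilon> > 0\<close> by auto
  obtain N\<^sub>2 where step: "\<And>n. n \<ge> N\<^sub>2 \<Longrightarrow> \<sigma> (x n) (x (Suc n)) < \<epsilon> / 2"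
    using eventually_step_dist_less[of "\<epsilon> / 2"] \<open>\<epsilon> > 0\<close> by auto
  have ordered: "\<sigma> (x n) (x m) < \<epsilon>" if "n \<ge> max N\<^sub>1 N\<^sub>2" "m \<ge> n" for n m
  proof -
    obtain j where m: "m = n + j"
      using le_Suc_ex \<open>m \<ge> n\<close> by blast
    consider "j = 0" | k where "j = 2 * k + 1" | k where "j = Suc (2 * k + 1)"
    proof -
      have "j = 0 \<or> (\<exists>k. j = 2 * k + 1) \<or> (\<exists>k. j = Suc (2 * k + 1))"
        by presburger
      then show thesis
        using that by blast
    qed
    then show ?thesis
    proof cases
      case 1
      then show ?thesis
        using self_dist_le_twice[of "x n" "x (Suc n)"] step[of n] that m by simp
    next
      case (2 k)
      then show ?thesis
        using odd_gap[of n k] that m \<open>\<epsilon> > 0\<close> by simp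
    next
      case (3 k)
      then have "\<sigma> (x n) (x m) \<le> \<sigma> (x n) (x (Suc n)) + \<sigma> (x (Suc n)) (x (Suc n + 2 * k + 1))"
        using triangle m by simp
      then show ?thesis
        using odd_gap[of "Suc n" k] step[of n] that by simp
    qed
  qed
  show "\<exists>N. \<forall>n\<ge>N. \<forall>m\<ge>N. \<bar>\<sigma> (x n) (x m) - 0\<bar> < \<epsilon>"
    using ordered commute nonneg by (metis abs_of_nonneg diff_zero nle_le)
qed

end

theorem corollary2p6:
  fixes \<sigma> :: "'a \<Rightarrow> 'a \<Rightarrow> real"
    and \<phi> :: "real \<Rightarrow> real"
    and S T :: "'a \<Rightarrow> 'a"
  assumes "metric_like \<sigma>"
    and "ml_complete \<sigma>"
    and "\<forall>t>0. \<phi> t > 1"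
    and "\<forall>t :: nat \<Rightarrow> real. (\<forall>n. t n > 0) \<longrightarrow>
            filterlim (\<lambda>n. \<phi> (t n)) (at_right 1) sequentially \<longrightarrow> t \<longlonglongrightarrow> 0"
    and "surj S" and "surj T"
    and "\<forall>x y. \<sigma> x y > 0 \<longrightarrow> \<sigma> (T x) (S y) \<ge> \<phi> (\<sigma> x y) * \<sigma> x y"
  shows "\<exists>x. T x = x \<and> S x = x"
proof -
  interpret metric_like_space \<sigma>
    using assms(1) by unfold_locales
  obtain x where T_preimage: "\<And>n. even n \<Longrightarrow> T (x (Suc n)) = x n"
    and S_preimage: "\<And>n. odd n \<Longrightarrow> S (x (Suc n)) = x n"
    using alternating_preimage_sequence[OF assms(5,6)] by metis
  interpret odd_gap_contraction \<sigma> \<phi> x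
    using assms(3,4) preimage_sequence_contracts[where x = x, OF assms(7) T_preimage S_preimage]
    by unfold_locales auto
  obtain p where p_double_limit: "ml_double_limit \<sigma> x (\<sigma> p p)" and "ml_converges \<sigma> x p"
    using assms(2) double_limit_zero unfolding ml_complete_def ml_Cauchy_def by blast
  moreover have "\<sigma> p p = 0"
    using ml_double_limit_unique[OF p_double_limit double_limit_zero] .
  ultimately have limit: "(\<lambda>n. \<sigma> (x n) p) \<longlonglongrightarrow> 0"
    unfolding ml_converges_def by simp
  have weak_expansion: "\<And>a b. \<sigma> a b \<le> \<sigma> (T a) (S b)"
    using weakly_expansive[OF assms(3,7)] .
  have "S p = p"
    using fixed_point_of_limit[OF weak_expansion assms(5) _ limit] T_preimage by simp
  moreover have "T p = p"
  proof (rule fixed_point_of_limit[of S T "\<lambda>n. x (Suc n)"])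
    show "\<sigma> a b \<le> \<sigma> (S a) (T b)" for a b
      using weak_expansion[of b a] by (simp add: commute)
  qed (use assms(6) S_preimage LIMSEQ_Suc[OF limit] in auto)
  ultimately show ?thesis
    by blast
qed

end
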